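(* Let $a\in[0,1)$ and $q\in(0,q_a]$, where $q_a:=\min\big(\log_2(2-a),\tfrac12\big)$. Then $-\Delta_a\ge W$ in the sense of quadratic forms, where $W=\mathrm{diag}(w_1,w_2,\dots)$ with \[ w_n=2-\Big(1-\frac1n\Big)^q-\Big(1+\frac1n\Big)^q-a\,\delta_{n,1},\qquad n\in\mathbb{N}. \] Moreover, each such weight $w$ is an optimal Hardy weight for $-\Delta_a$.
   Context: $\mathbb{N}=\{1,2,\dots\}$. For $a\in[0,1)$, $-\Delta_a:=2-J_a$ on $\ell^2(\mathbb{N})$, where $(J_a\psi)_1=a\psi_1+\psi_2$ and $(J_a\psi)_n=\psi_{n-1}+\psi_{n+1}$ for $n\ge2$; its quadratic form is $\langle u,-\Delta_a u\rangle=\sum_{n\ge1}|u_n-u_{n-1}|^2-a|u_1|^2$ with $u_0:=0$. A Hardy weight for $-\Delta_a$ is a sequence $\tilde w\ge0$ with $\sum_n\tilde w_n|u_n|^2\le\langle u,-\Delta_au\rangle$ for all $u$ (equivalently all finitely supported $u$); it is optimal if every Hardy weight $\tilde w$ for $-\Delta_a$ with $\tilde w\ge w$ pointwise equals $w$. *)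

theory Defs
  imports "HOL-Analysis.Analysis"
begin

text \<open>Sequences on N = {1,2,...} are modelled as functions nat => _, where the
value at index 0 is ignored (the convention u_0 := 0 is built into the form).\<close>

text \<open>Quadratic form of -Delta_a on finitely supported u, with u_0 := 0.
  For n > N all terms vanish, so the sum over {1..N+1} is the full series.\<close>
definition qform :: "real \<Rightarrow> nat \<Rightarrow> (nat \<Rightarrow> complex) \<Rightarrow> real" where
  "qform a N u =
     (\<Sum>n=1..Suc N. (cmod ((if n = 1 then u 1 else u n - u (n - 1))))^2) - a * (cmod (u 1))^2"

definition hardy_weight :: "real \<Rightarrow> (nat \<Rightarrow> real) \<Rightarrow> bool" where
  "hardy_weight a w \<longleftrightarrow>
     (\<forall>n\<ge>1. w n \<ge> 0) \<and>
     (\<forall>u N. (\<forall>n>N. u n = 0) \<longrightarrow>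
        (\<Sum>n=1..N. w n * (cmod (u n))^2) \<le> qform a N u)"

definition optimal_hardy_weight :: "real \<Rightarrow> (nat \<Rightarrow> real) \<Rightarrow> bool" where
  "optimal_hardy_weight a w \<longleftrightarrow>
     hardy_weight a w \<and>
     (\<forall>w'. hardy_weight a w' \<and> (\<forall>n\<ge>1. w' n \<ge> w n) \<longrightarrow> (\<forall>n\<ge>1. w' n = w n))"

definition q_a :: "real \<Rightarrow> real" where
  "q_a a = min (log 2 (2 - a)) (1/2)"

definition W_weight :: "real \<Rightarrow> real \<Rightarrow> nat \<Rightarrow> real" where
  "W_weight a q n = 2 - (1 - 1 / real n) powr q - (1 + 1 / real n) powr q
                     - (if n = 1 then a else 0)"

end

theory Submission
  imports Defs "HOL-Analysis.Harmonic_Numbers"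
begin

text \<open>With the ground state g n = n powr q, the potential \<open>-\<Delta>g/g\<close> equals W plus the
  boundary term \<open>a \<delta>\<^sub>n\<^sub>1\<close>, so the ground state representation writes the form of v as
  \<open>\<Sum> W v\<^sup>2\<close> plus a sum of squares; this is the Hardy inequality. W is nonnegative: at
  n = 1 it is \<open>2 - 2 powr q - a\<close> and \<open>q \<le> log 2 (2 - a)\<close>, for n \<ge> 2 use concavity of
  \<open>t powr q\<close>. For optimality, a Hardy weight \<open>w \<ge> W\<close> is tested on \<open>g \<phi>\<close>, where \<open>\<phi>\<close> is 1
  up to m and then decays like the tail of the harmonic series up to M + 1. Since
  \<open>g (n - 1) g n \<le> n\<close> for \<open>q \<le> 1/2\<close>, the remainder of \<open>g \<phi>\<close> is at most
  \<open>1 / (H\<^sub>M\<^sub>+\<^sub>1 - H\<^sub>m)\<close>, which tends to 0 as M grows, forcing w m = W m.\<close>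

definition ground_state_potential :: "(nat \<Rightarrow> real) \<Rightarrow> nat \<Rightarrow> real" where
  "ground_state_potential g n = 2 - g (Suc n) / g n - g (n - 1) / g n"

definition ground_state_remainder :: "(nat \<Rightarrow> real) \<Rightarrow> nat \<Rightarrow> (nat \<Rightarrow> real) \<Rightarrow> real" where
  "ground_state_remainder g N v =
     (\<Sum>n=2..Suc N. g (n - 1) * g n * (v n / g n - v (n - 1) / g (n - 1))^2)"

lemma square_diff_eq_weighted:
  fixes a b X Y :: real
  assumes "a > 0" "b > 0"
  shows "(Y - X)^2 = (1 - b/a) * X^2 + (1 - a/b) * Y^2 + a * b * (Y/b - X/a)^2"
  using assms by (simp add: field_simps power2_eq_square)

lemma ground_state_representation_boundary:
  fixes g v :: "nat \<Rightarrow> real"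
  assumes "\<And>n. n \<ge> 1 \<Longrightarrow> g n > 0" "g 0 = 0" "N \<ge> 1"
  shows "(\<Sum>n=1..N. (v n - (if n = 1 then 0 else v (n - 1)))^2) =
           (\<Sum>n=1..N. ground_state_potential g n * (v n)^2) - (1 - g (Suc N) / g N) * (v N)^2
           + (\<Sum>n=2..N. g (n - 1) * g n * (v n / g n - v (n - 1) / g (n - 1))^2)"
  using assms(3)
proof (induction N rule: nat_induct_at_least)
  case base
  have "g 1 > 0" using assms(1) by auto
  then show ?case using assms(2) by (simp add: ground_state_potential_def field_simps)
next
  case (Suc N)
  have "g N > 0" "g (Suc N) > 0" using assms(1) Suc by auto
  from square_diff_eq_weighted[OF this, of "v (Suc N)" "v N"] Suc show ?case
    by (simp add: sum.cl_ivl_Suc ground_state_potential_def algebra_simps)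
qed

lemma ground_state_representation:
  fixes g v :: "nat \<Rightarrow> real"
  assumes "\<And>n. n \<ge> 1 \<Longrightarrow> g n > 0" "g 0 = 0" "v (Suc N) = 0"
  shows "(\<Sum>n=1..Suc N. (v n - (if n = 1 then 0 else v (n - 1)))^2) =
           (\<Sum>n=1..N. ground_state_potential g n * (v n)^2) + ground_state_remainder g N v"
  using ground_state_representation_boundary[of g "Suc N" v] assms
  by (simp add: ground_state_remainder_def)

lemma ground_state_remainder_nonneg:
  assumes "\<And>n. g n \<ge> 0"
  shows "ground_state_remainder g N v \<ge> 0"
  unfolding ground_state_remainder_def using assms by (intro sum_nonneg) simp

lemma ground_state_remainder_mult:
  assumes "\<And>n. n \<ge> 1 \<Longrightarrow> g n > 0"
  shows "ground_state_remainder g N (\<lambda>n. g n * \<phi> n) =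
           (\<Sum>n=2..Suc N. g (n - 1) * g n * (\<phi> n - \<phi> (n - 1))^2)"
proof -
  have "g n \<noteq> 0" "g (n - 1) \<noteq> 0" if "n \<in> {2..Suc N}" for n
  proof -
    from that have "n \<ge> 1" "n - 1 \<ge> 1" by auto
    then show "g n \<noteq> 0" "g (n - 1) \<noteq> 0" using assms by (simp_all add: order_less_imp_not_eq2)
  qed
  then show ?thesis unfolding ground_state_remainder_def by (intro sum.cong) simp_all
qed

lemma ground_state_potential_power:
  assumes "n \<ge> 1"
  shows "ground_state_potential (\<lambda>n. real n powr q) n = W_weight a q n + (if n = 1 then a else 0)"
proof -
  have "1 + 1 / real n = real (Suc n) / real n" "1 - 1 / real n = real (n - 1) / real n"
    using assms by (simp_all add: field_simps of_nat_diff)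
  then show ?thesis
    unfolding ground_state_potential_def W_weight_def by (simp add: powr_divide)
qed

lemma qform_of_real:
  "qform a N (\<lambda>n. complex_of_real (v n)) =
     (\<Sum>n=1..Suc N. (v n - (if n = 1 then 0 else v (n - 1)))^2) - a * (v 1)^2"
proof -
  have "(cmod (if n = 1 then complex_of_real (v 1) else of_real (v n) - of_real (v (n - 1))))^2
          = (v n - (if n = 1 then 0 else v (n - 1)))^2" for n
    by (cases "n = 1") (simp_all flip: of_real_diff)
  then show ?thesis unfolding qform_def by simp
qed

lemma qform_norm_le: "qform a N (\<lambda>n. complex_of_real (cmod (u n))) \<le> qform a N u"
proof -
  have "(cmod (u n) - (if n = 1 then 0 else cmod (u (n - 1))))^2
          \<le> (cmod (if n = 1 then u 1 else u n - u (n - 1)))^2" for n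
  proof (cases "n = 1")
    case False
    have "\<bar>cmod (u n) - cmod (u (n - 1))\<bar> \<le> cmod (u n - u (n - 1))"
      by (rule norm_triangle_ineq3)
    from power_mono[OF this abs_ge_zero, of 2] False show ?thesis by simp
  qed simp
  then have "(\<Sum>n=1..Suc N. (cmod (u n) - (if n = 1 then 0 else cmod (u (n - 1))))^2)
               \<le> (\<Sum>n=1..Suc N. (cmod (if n = 1 then u 1 else u n - u (n - 1)))^2)"
    by (rule sum_mono)
  then show ?thesis unfolding qform_of_real qform_def by linarith
qed

lemma qform_power_ground_state:
  assumes "q > 0" "v (Suc N) = 0"
  shows "qform a N (\<lambda>n. complex_of_real (v n)) =
           (\<Sum>n=1..N. W_weight a q n * (v n)^2) + ground_state_remainder (\<lambda>n. real n powr q) N v"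
proof -
  have "(\<Sum>n=1..N. ground_state_potential (\<lambda>n. real n powr q) n * (v n)^2)
          = (\<Sum>n=1..N. W_weight a q n * (v n)^2 + (if n = 1 then a * (v n)^2 else 0))"
    using ground_state_potential_power[of _ q a] by (intro sum.cong refl) (simp add: distrib_right)
  also have "\<dots> = (\<Sum>n=1..N. W_weight a q n * (v n)^2) + (if N = 0 then 0 else a * (v 1)^2)"
    by (simp add: sum.distrib)
  finally show ?thesis
    using ground_state_representation[of "\<lambda>n. real n powr q" v N] assms
    by (cases "N = 0") (simp_all add: qform_of_real)
qed

lemma W_weight_hardy_inequality:
  assumes "q > 0" "\<forall>n>N. u n = 0"
  shows "(\<Sum>n=1..N. W_weight a q n * (cmod (u n))^2) \<le> qform a N u"
proof -
  have "(\<Sum>n=1..N. W_weight a q n * (cmod (u n))^2)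
          \<le> qform a N (\<lambda>n. complex_of_real (cmod (u n)))"
    using qform_power_ground_state[of q "\<lambda>n. cmod (u n)" N a] assms
      ground_state_remainder_nonneg[of "\<lambda>n. real n powr q"] by simp
  also have "\<dots> \<le> qform a N u" by (rule qform_norm_le)
  finally show ?thesis .
qed

lemma one_plus_powr_le:
  fixes t q :: real
  assumes "t > -1" "0 \<le> q" "q \<le> 1"
  shows "(1 + t) powr q \<le> 1 + q * t"
  using Youngs_inequality_0[of q "1 - q" "1 + t" 1] assms by (simp add: algebra_simps)

lemma W_weight_nonneg:
  assumes "a < 1" "0 < q" "q \<le> q_a a" "n \<ge> 1"
  shows "W_weight a q n \<ge> 0"
proof (cases "n = 1")
  case True
  have "q \<le> log 2 (2 - a)" using assms(3) by (simp add: q_a_def)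
  then have "2 powr q \<le> 2 powr (log 2 (2 - a))" by (intro powr_mono) auto
  also have "\<dots> = 2 - a" using assms(1) by simp
  finally show ?thesis using True assms(2) by (simp add: W_weight_def)
next
  case False
  have "q \<le> 1" using assms(3) by (simp add: q_a_def)
  moreover have "-1 < - 1 / real n" using False assms(4) by simp
  moreover have "-1 < 1 / real n" by (rule less_le_trans[of _ 0]) simp_all
  ultimately have "(1 + (- 1 / real n)) powr q \<le> 1 + q * (- 1 / real n)"
    and "(1 + 1 / real n) powr q \<le> 1 + q * (1 / real n)"
    using assms(2) by (intro one_plus_powr_le; simp)+
  then show ?thesis using False by (simp add: W_weight_def)
qed

lemma powr_pred_mult_powr_le:
  assumes "0 < q" "q \<le> 1/2" "n \<ge> 1"
  shows "real (n - 1) powr q * real n powr q \<le> real n"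
proof -
  have "real (n - 1) powr q * real n powr q \<le> real n powr q * real n powr q"
    by (intro mult_right_mono powr_mono2) (use assms in auto)
  also have "\<dots> = real n powr (2 * q)" by (simp add: powr_add[symmetric])
  also have "\<dots> \<le> real n powr 1" by (intro powr_mono) (use assms in auto)
  finally show ?thesis using assms(3) by simp
qed

lemma sum_harmonic_tail:
  assumes "m \<le> K"
  shows "(\<Sum>n=1..K. if n \<le> m then 0 else 1 / real n) = harm K - (harm m :: real)"
  using assms
proof (induction K rule: nat_induct_at_least)
  case base
  have "(\<Sum>n=1..m. if n \<le> m then 0 else 1 / real n) = (0::real)" by (intro sum.neutral) auto
  then show ?case by simp
next
  case (Suc K)
  then show ?case by (simp add: sum.cl_ivl_Suc harm_Suc inverse_eq_divide)
qed

definition harmonic_cutoff :: "nat \<Rightarrow> nat \<Rightarrow> nat \<Rightarrow> real" where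
  "harmonic_cutoff m M n =
     (if n \<le> m then 1
      else if n \<le> Suc M then (harm (Suc M) - harm n) / (harm (Suc M) - harm m)
      else 0)"

lemma harm_less_harm_Suc:
  assumes "m \<le> M"
  shows "harm m < (harm (Suc M) :: real)"
proof -
  have "0 < inverse (real (Suc M))" by simp
  then show ?thesis using harm_mono[OF assms, where 'a = real] harm_Suc[of M, where 'a = real] by linarith
qed

lemma harmonic_cutoff_diff:
  assumes "m < n" "n \<le> Suc M"
  shows "harmonic_cutoff m M n - harmonic_cutoff m M (n - 1) = - 1 / (real n * (harm (Suc M) - harm m))"
proof -
  define H :: real where "H = harm (Suc M) - harm m"
  have "H > 0" using harm_less_harm_Suc[of m M] assms by (simp add: H_def)
  have pred: "harmonic_cutoff m M (n - 1) = (harm (Suc M) - harm (n - 1)) / H"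
    using assms \<open>H > 0\<close> by (cases "n - 1 = m") (auto simp: harmonic_cutoff_def H_def)
  have at_n: "harmonic_cutoff m M n = (harm (Suc M) - harm n) / H"
    using assms by (simp add: harmonic_cutoff_def H_def)
  have "harm n = harm (n - 1) + 1 / (real n :: real)"
    using harm_Suc[of "n - 1"] assms(1) by (simp add: inverse_eq_divide)
  then show ?thesis
    unfolding pred at_n H_def[symmetric] using \<open>H > 0\<close> by (simp add: field_simps)
qed

lemma ground_state_remainder_harmonic_cutoff:
  assumes "0 < q" "q \<le> 1/2" "m \<le> M"
  shows "ground_state_remainder (\<lambda>n. real n powr q) M (\<lambda>n. real n powr q * harmonic_cutoff m M n)
           \<le> 1 / (harm (Suc M) - harm m)"
proof -
  define H :: real where "H = harm (Suc M) - harm m"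
  have "H > 0" using harm_less_harm_Suc[OF assms(3)] by (simp add: H_def)
  have term_le: "real (n - 1) powr q * real n powr q *
                    (harmonic_cutoff m M n - harmonic_cutoff m M (n - 1))^2
                  \<le> (if n \<le> m then 0 else 1 / real n) / H^2" if n: "n \<in> {2..Suc M}" for n
  proof (cases "n \<le> m")
    case True
    then show ?thesis by (simp add: harmonic_cutoff_def)
  next
    case False
    have "real (n - 1) powr q * real n powr q * (1 / (real n * H))^2 \<le> real n * (1 / (real n * H))^2"
      by (intro mult_right_mono powr_pred_mult_powr_le) (use assms n in auto)
    also have "\<dots> = 1 / real n / H^2" using n \<open>H > 0\<close> by (simp add: field_simps power2_eq_square)
    finally show ?thesis
      using False n harmonic_cutoff_diff[of m n M] by (simp add: H_def power2_minus)
  qed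
  have "ground_state_remainder (\<lambda>n. real n powr q) M (\<lambda>n. real n powr q * harmonic_cutoff m M n)
          = (\<Sum>n=2..Suc M. real (n - 1) powr q * real n powr q *
                            (harmonic_cutoff m M n - harmonic_cutoff m M (n - 1))^2)"
    by (rule ground_state_remainder_mult) simp
  also have "\<dots> \<le> (\<Sum>n=2..Suc M. (if n \<le> m then 0 else 1 / real n) / H^2)"
    by (intro sum_mono term_le)
  also have "\<dots> \<le> (\<Sum>n=1..Suc M. (if n \<le> m then 0 else 1 / real n) / H^2)"
    by (intro sum_mono2) auto
  also have "\<dots> = H / H^2"
    using sum_harmonic_tail[of m "Suc M"] assms(3) by (simp add: H_def flip: sum_divide_distrib)
  also have "\<dots> = 1 / H" using \<open>H > 0\<close> by (simp add: power2_eq_square)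
  finally show ?thesis by (simp add: H_def)
qed

lemma hardy_weight_le_W_weight:
  assumes "0 < q" "q \<le> 1/2" "hardy_weight a w" "\<forall>n\<ge>1. W_weight a q n \<le> w n" "m \<ge> 1"
  shows "w m \<le> W_weight a q m"
proof -
  let ?g = "\<lambda>n. real n powr q"
  have hardy: "(\<Sum>n=1..N. w n * (cmod (u n))^2) \<le> qform a N u" if "\<forall>n>N. u n = 0" for u N
    using assms(3) that unfolding hardy_weight_def by blast
  have bound: "w m - W_weight a q m \<le> 1 / (harm (Suc M) - harm m)" if M: "m \<le> M" for M
  proof -
    define v where "v = (\<lambda>n. ?g n * harmonic_cutoff m M n)"
    have "v n = 0" if "n > M" for n
      using M that by (cases "n = Suc M") (auto simp: v_def harmonic_cutoff_def)
    then have "v (Suc M) = 0" "\<forall>n>M. complex_of_real (v n) = 0" by simp_all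
    from hardy[OF this(2)] have "(\<Sum>n=1..M. w n * (v n)^2) \<le> qform a M (\<lambda>n. complex_of_real (v n))"
      by simp
    also have "\<dots> = (\<Sum>n=1..M. W_weight a q n * (v n)^2) + ground_state_remainder ?g M v"
      using qform_power_ground_state[of q v M a, OF assms(1) \<open>v (Suc M) = 0\<close>] .
    finally have "(\<Sum>n=1..M. (w n - W_weight a q n) * (v n)^2) \<le> ground_state_remainder ?g M v"
      by (simp add: left_diff_distrib sum_subtractf)
    moreover have "(w m - W_weight a q m) * (v m)^2 \<le> (\<Sum>n=1..M. (w n - W_weight a q n) * (v n)^2)"
      by (rule member_le_sum) (use assms(4,5) M in auto)
    moreover have "1 \<le> (v m)^2"
      using assms(1,5) by (simp add: v_def harmonic_cutoff_def one_le_power ge_one_powr_ge_zero)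
    then have "w m - W_weight a q m \<le> (w m - W_weight a q m) * (v m)^2"
      using mult_left_mono[of 1 "(v m)^2" "w m - W_weight a q m"] assms(4,5) by simp
    moreover note ground_state_remainder_harmonic_cutoff[OF assms(1,2) M, folded v_def]
    ultimately show ?thesis by linarith
  qed
  have "filterlim (\<lambda>M. harm (Suc M) - harm m :: real) at_top sequentially"
    using filterlim_tendsto_add_at_top[OF tendsto_const[of "- harm m"], of "\<lambda>M. harm (Suc M)"]
      harm_at_top
    by (simp add: filterlim_sequentially_Suc)
  then have "(\<lambda>M. 1 / (harm (Suc M) - harm m :: real)) \<longlonglongrightarrow> 0"
    unfolding inverse_eq_divide[symmetric] by (rule tendsto_inverse_0_at_top)
  then have "w m - W_weight a q m \<le> 0"
    using bound by (intro LIMSEQ_le_const) auto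
  then show ?thesis by simp
qed

theorem theorem4p8:
  fixes a q :: real
  assumes "0 \<le> a" "a < 1" "0 < q" "q \<le> q_a a"
  shows "(\<forall>u N. (\<forall>n>N. u n = 0) \<longrightarrow>
            (\<Sum>n=1..N. W_weight a q n * (cmod (u n))^2) \<le> qform a N u)
         \<and> optimal_hardy_weight a (W_weight a q)"
proof -
  have hardy: "\<forall>u N. (\<forall>n>N. u n = 0) \<longrightarrow>
                 (\<Sum>n=1..N. W_weight a q n * (cmod (u n))^2) \<le> qform a N u"
    using W_weight_hardy_inequality[OF assms(3)] by blast
  moreover have "hardy_weight a (W_weight a q)"
    unfolding hardy_weight_def using hardy W_weight_nonneg[OF assms(2-4)] by blast
  moreover have "q \<le> 1/2" using assms(4) by (simp add: q_a_def)
  ultimately show ?thesis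
    unfolding optimal_hardy_weight_def
    using hardy_weight_le_W_weight[OF assms(3)] by (meson order_antisym)
qed

end
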